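(* Let $n\ge 6$ be even, and let $r=(s_1,\dots,s_n)$ be a Latin row of length $n$ such that $\mathrm{dist}(s_j,s_{j+1})\ge \frac n2-1$ for all $1\le j\le n-1$ and $\mathrm{dist}(s_n,s_1)\ge\frac n2-1$. Let $d_*=(\epsilon_1,\dots,\epsilon_{n-1},h)$ be its extended difference row. Then $d_*$ is a rotation of \[(\underbrace{1,\dots,1}_{\frac n2-1},0,\underbrace{-1,\dots,-1}_{\frac n2-1},0),\] or $d_*=\pm(1,1,\dots,1)$. Moreover, the number of such rows $r$ with $s_1=1$ is $n+2$ if $n\equiv 0\pmod 4$ and $n$ if $n\equiv 2\pmod 4$.
   Context: Symbols are $[1,n]$. For $a,b\in[1,n]$, $\mathrm{dist}(a,b)$ is the minimum of the residues of $a-b$ and $b-a$ modulo $n$ (in $[0,n-1]$). A Latin row of length $n$ is a permutation $(s_1,\dots,s_n)$ of $[1,n]$. Its extended difference row is $d_*=(\epsilon_1,\dots,\epsilon_{n-1},h)$ where, with $h_j\in[0,n-1]$, $h_j\equiv s_{j+1}-s_j\pmod n$ for $1\le j\le n-1$ and $h_n\equiv s_1-s_n\pmod n$, one sets $\epsilon_j=h_j-\frac n2$ and $h=h_n-\frac n2$ (integers, not reduced mod $n$). Writing $\epsilon_n=h$, the rotation by 1 of $d_*$ is $(\epsilon_n,\epsilon_1,\dots,\epsilon_{n-1})$; the rotations of $d_*$ are the results of applying this cyclic shift $1,2,\dots,n$ times. *)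

theory Defs
  imports Main
begin

text \<open>A Latin row of length n: list (s_1,...,s_n) (0-based list indices) that is a
permutation of 1..n.\<close>
definition latin_row :: "nat \<Rightarrow> int list \<Rightarrow> bool" where
  "latin_row n xs \<longleftrightarrow> length xs = n \<and> distinct xs \<and> set xs = {1..int n}"

definition cdist :: "nat \<Rightarrow> int \<Rightarrow> int \<Rightarrow> int" where
  "cdist n a b = min ((a - b) mod int n) ((b - a) mod int n)"

definition dist_ok :: "nat \<Rightarrow> int list \<Rightarrow> bool" where
  "dist_ok n xs \<longleftrightarrow>
     (\<forall>i < n. cdist n (xs ! i) (xs ! ((i + 1) mod n)) \<ge> int n div 2 - 1)"

text \<open>Extended difference row (eps_1,...,eps_(n-1),h), eps_j = h_j - n/2,
  h_j = (s_(j+1) - s_j) mod n, h_n = (s_1 - s_n) mod n (n even).\<close>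
definition ext_diff_row :: "nat \<Rightarrow> int list \<Rightarrow> int list" where
  "ext_diff_row n xs =
     map (\<lambda>i. (xs ! ((i + 1) mod n) - xs ! i) mod int n - int n div 2) [0..<n]"

definition rot1 :: "'a list \<Rightarrow> 'a list" where
  "rot1 xs = (if xs = [] then [] else last xs # butlast xs)"

definition is_rotation_of :: "'a list \<Rightarrow> 'a list \<Rightarrow> bool" where
  "is_rotation_of d p \<longleftrightarrow> (\<exists>k \<in> {1..length p}. d = (rot1 ^^ k) p)"

definition zigzag_pattern :: "nat \<Rightarrow> int list" where
  "zigzag_pattern n =
     replicate (n div 2 - 1) 1 @ [0] @ replicate (n div 2 - 1) (-1) @ [0]"

end

(*
  Write H = n div 2. The distance condition says exactly that every entry of the extended
  difference row lies in {-1, 0, 1}, and a row with s_1 = 1 is recovered from these entries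
  e_1, ..., e_n as s_(j+1) = 1 + (j * H + e_1 + ... + e_j) mod n. The row is Latin iff these
  offsets are distinct mod n and n divides e_1 + ... + e_n, so this sum is -n, 0 or n.

  If it is n or -n, all entries equal 1, resp. -1, and the offsets j * (H + 1), resp.
  j * (H - 1), are distinct mod n = 2 * H iff H is even.

  If it is 0, the walk E_j = e_1 + ... + e_j is n-periodic, and since the offsets of j and
  j + 2 * t differ by t * n + E_(j + 2 * t) - E_j, it never takes the same value twice at an
  even distance less than n; in particular no value three times in one period. At its
  minimum and at its maximum the walk makes a flat step (otherwise the two neighbours, at
  distance 2, would agree), and every value strictly in between is met exactly once on the
  ascent and once on the descent. So ascent and descent have the same length, n/2 - 1, with
  all steps +1 resp. -1: the row is a rotation of the zigzag pattern. Conversely all n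
  rotations, and both constant rows when 4 divides n, do occur, which gives the count.
*)

theory Submission
  imports Defs
begin

section \<open>Periodic sequences and walks with bounded steps\<close>

lemma periodic_mod:
  fixes f :: "nat \<Rightarrow> 'a"
  assumes "\<And>i. f (i + n) = f i"
  shows "f (i mod n) = f i"
proof (induction i rule: less_induct)
  case (less i)
  show ?case
  proof (cases "i < n")
    case False
    then have "f ((i - n) mod n) = f (i - n)" using less by (cases n) auto
    then show ?thesis using False assms[of "i - n"] by (simp add: le_mod_geq)
  qed simp
qed

lemma sum_period:
  fixes e :: "nat \<Rightarrow> 'a::comm_monoid_add"
  assumes "\<And>i. e (i + n) = e i"
  shows "(\<Sum>i = j..<j + n. e i) = (\<Sum>i<n. e i)"
proof (induction j)
  case (Suc j)
  show ?case
  proof (cases "n = 0")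
    case False
    have "(\<Sum>i = Suc j..<Suc j + n. e i) = (\<Sum>i = Suc j..<j + n. e i) + e (j + n)"
      using False by (simp add: sum.atLeastLessThan_Suc)
    also have "\<dots> = e j + (\<Sum>i = Suc j..<j + n. e i)"
      using assms[of j] by (simp add: add.commute)
    also have "\<dots> = (\<Sum>i = j..<j + n. e i)"
      using False by (simp add: sum.atLeast_Suc_lessThan)
    finally show ?thesis using Suc.IH by simp
  qed simp
qed (simp add: atLeast0LessThan)

lemma sum_eq_card_imp_eq_one:
  fixes x :: "'a \<Rightarrow> int"
  assumes "finite A" "\<And>i. i \<in> A \<Longrightarrow> x i \<le> 1" "sum x A = int (card A)" "i \<in> A"
  shows "x i = 1"
proof (rule ccontr)
  assume "x i \<noteq> 1"
  with assms(2,4) have "x i < 1" by fastforce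
  then have "sum x A < sum (\<lambda>_. 1) A"
    using assms by (intro sum_strict_mono_ex1) auto
  then show False using assms(3) by simp
qed

lemma full_rise_imp_unit_steps:
  fixes f :: "nat \<Rightarrow> int"
  assumes "\<And>k. f (Suc k) - f k \<le> 1" "a \<le> b" "f b - f a = int (b - a)" "a \<le> i" "i < b"
  shows "f (Suc i) - f i = 1"
  using assms by (intro sum_eq_card_imp_eq_one[of "{a..<b}"]) (simp_all add: sum_Suc_diff')

lemma nth_zigzag_pattern:
  assumes "even n" "i < n"
  shows "zigzag_pattern n ! i =
    (if i < n div 2 - 1 then 1 else if i = n div 2 - 1 then 0 else if i < n - 1 then -1 else 0)"
  using assms by (auto simp: zigzag_pattern_def nth_append elim!: evenE)

lemma length_zigzag_pattern: "even n \<Longrightarrow> 2 \<le> n \<Longrightarrow> length (zigzag_pattern n) = n"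
  by (auto simp: zigzag_pattern_def elim!: evenE)

lemma zigzag_pattern_walk:
  assumes "j < 2 * H"
  shows "(\<Sum>i<j. zigzag_pattern (2 * H) ! i) = (if j < H then int j else 2 * int H - 1 - int j)"
  using assms
proof (induction j)
  case (Suc j)
  then show ?case using nth_zigzag_pattern[of "2 * H" j] by auto
qed simp

section \<open>Periodic walks without repeats at even distance\<close>

(* The walk of partial sums of an extended difference row with sum 0. *)
locale parity_walk =
  fixes n :: nat and E :: "nat \<Rightarrow> int"
  assumes even_n: "even n" and n_ge_4: "4 \<le> n"
    and periodic: "\<And>i. E (i + n) = E i"
    and unit_steps: "\<And>i. \<bar>E (Suc i) - E i\<bar> \<le> 1"
    and even_gap_distinct: "\<And>j l. j < l \<Longrightarrow> l < j + n \<Longrightarrow> even (l - j) \<Longrightarrow> E j \<noteq> E l"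
begin

lemma parity_walk_neg: "parity_walk n (\<lambda>i. - E i)"
proof unfold_locales
  fix i show "\<bar>- E (Suc i) - - E i\<bar> \<le> 1" using unit_steps[of i] by linarith
qed (use even_n n_ge_4 periodic even_gap_distinct in auto)

lemma parity_walk_shift: "parity_walk n (\<lambda>i. E (i + r))"
proof unfold_locales
  fix i j l :: nat
  show "E (i + n + r) = E (i + r)" using periodic[of "i + r"] by (simp add: ac_simps)
  show "\<bar>E (Suc i + r) - E (i + r)\<bar> \<le> 1" using unit_steps[of "i + r"] by simp
  assume "j < l" "l < j + n" "even (l - j)"
  then show "E (j + r) \<noteq> E (l + r)" using even_gap_distinct[of "j + r" "l + r"] by simp
qed (use even_n n_ge_4 in auto)

lemma no_three_equal:
  assumes "i < j" "j < l" "l < i + n" "E i = E j" "E j = E l"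
  shows False
proof -
  have "even (j - i) \<or> even (l - j) \<or> even (l - i)" using assms(1,2) by presburger
  then show False using assms even_gap_distinct[of i j] even_gap_distinct[of j l]
      even_gap_distinct[of i l] by auto
qed

lemma ex_min: "\<exists>p. \<forall>i. E p \<le> E i"
proof -
  have "Min (E ` {..<n}) \<in> E ` {..<n}" using n_ge_4 by (intro Min_in) (auto simp: lessThan_empty_iff)
  moreover have "Min (E ` {..<n}) \<le> E i" for i
  proof -
    have "i mod n < n" using n_ge_4 by simp
    then show ?thesis using periodic_mod[of E n i] periodic by (metis Min_le finite_imageI
          finite_lessThan image_eqI lessThan_iff)
  qed
  ultimately show ?thesis by (metis imageE)
qed

(* Otherwise both neighbours of the minimum lie one above it, at distance 2. *)
lemma flat_step_at_min:
  assumes min: "\<forall>i. E p \<le> E i"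
  shows "\<exists>q. E q = E p \<and> E (Suc q) = E p"
proof (rule ccontr)
  assume not_flat: "\<not> ?thesis"
  define P where "P = p + n - 1"
  have P: "Suc P = p + n" "E (Suc P) = E p" using n_ge_4 periodic[of p] by (simp_all add: P_def)
  have "E P \<noteq> E p" "E (Suc (Suc P)) \<noteq> E p" using not_flat P by auto
  moreover have "E p \<le> E P" "E p \<le> E (Suc (Suc P))" using min by blast+
  ultimately have "E P = E p + 1" "E (Suc (Suc P)) = E p + 1"
    using P unit_steps[of P] unit_steps[of "Suc P"] by (simp_all add: abs_le_iff)
  moreover have "E P \<noteq> E (Suc (Suc P))" using even_gap_distinct[of P "Suc (Suc P)"] n_ge_4 by simp
  ultimately show False by simp
qed

lemma intermediate_value:
  assumes "lo \<le> hi" "min (E lo) (E hi) \<le> v" "v \<le> max (E lo) (E hi)"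
  shows "\<exists>i. lo \<le> i \<and> i \<le> hi \<and> E i = v"
proof (cases "E lo \<le> E hi")
  case True
  then show ?thesis using assms unit_steps by (intro nat_intermed_int_val) auto
next
  case False
  have "\<bar>- E (Suc i) - - E i\<bar> \<le> 1" for i using unit_steps[of i] by linarith
  then have "\<exists>i. lo \<le> i \<and> i \<le> hi \<and> - E i = - v"
    using assms False by (intro nat_intermed_int_val) auto
  then show ?thesis by simp
qed

(* A value strictly between the extrema is met on the way up, and again on the way down from b
   to a + n; meeting it twice on the way up would give three equal values in one period. *)
lemma bij_betw_between_flat_extrema:
  assumes min: "\<forall>i. E a \<le> E i" "E (Suc a) = E a"
    and max: "\<forall>i. E i \<le> E b" "E (Suc b) = E b"
    and ab: "a < b" "b < a + n"
  shows "bij_betw E {a + 2..<b} {E a<..<E b}"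
proof -
  have into: "E i \<in> {E a<..<E b}" if i: "a + 2 \<le> i" "i < b" for i
  proof -
    have "E i \<noteq> E a"
    proof
      assume "E i = E a"
      then show False using i ab min(2) by (intro no_three_equal[of a "Suc a" i]) simp_all
    qed
    moreover have "E i \<noteq> E b"
    proof
      assume "E i = E b"
      moreover have "Suc b < i + n" using i ab by linarith
      ultimately show False using i(2) max(2) by (intro no_three_equal[of i b "Suc b"]) simp_all
    qed
    moreover have "E a \<le> E i" "E i \<le> E b" using min(1) max(1) by blast+
    ultimately show ?thesis by auto
  qed
  have onto: "v \<in> E ` {a + 2..<b}" if v: "E a < v" "v < E b" for v
  proof -
    obtain i where i: "Suc a \<le> i" "i \<le> b" "E i = v"
      using intermediate_value[of "Suc a" b v] ab min(2) v by auto
    then have "i \<noteq> Suc a" "i \<noteq> b" using v min(2) by auto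
    with i show ?thesis by force
  qed
  have "inj_on E {a + 2..<b}"
  proof (rule inj_onI, rule ccontr)
    fix i j assume ij: "i \<in> {a + 2..<b}" "j \<in> {a + 2..<b}" "E i = E j" "i \<noteq> j"
    have Ei: "E a < E i" "E i < E b" using into ij(1) by auto
    have "E (a + n) = E a" using periodic[of a] by (simp add: add.commute)
    then obtain l where l: "Suc b \<le> l" "l \<le> a + n" "E l = E i"
      using intermediate_value[of "Suc b" "a + n" "E i"] ab max(2) Ei by auto
    then have "l \<noteq> Suc b" "l \<noteq> a + n" using Ei max(2) \<open>E (a + n) = E a\<close> by auto
    then have "i < l" "j < l" "l < i + n" "l < j + n" using l ij(1,2) by auto
    with ij(3,4) l(3) show False by (metis no_three_equal linorder_neqE_nat)
  qed
  then show ?thesis using into onto by (intro bij_betw_imageI) auto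
qed

(* The ascent and the descent both biject onto the values strictly between minimum and maximum,
   so they have the same length. *)
lemma flat_max_at_half_period:
  assumes min: "\<forall>i. E 0 \<le> E i" and flat: "E 1 = E 0"
  shows "E (Suc (n div 2)) = E (n div 2) \<and> E (n div 2) = E 0 + int (n div 2) - 1"
proof -
  interpret neg: parity_walk n "\<lambda>i. - E i" by (rule parity_walk_neg)
  obtain q0 where q0: "\<forall>i. - E q0 \<le> - E i" using neg.ex_min by blast
  then obtain q1 where "- E q1 = - E q0" "- E (Suc q1) = - E q0"
    using neg.flat_step_at_min by blast
  then have q1: "\<forall>i. E i \<le> E q1" "E (Suc q1) = E q1" using q0 by auto
  define q where "q = q1 mod n"
  have "E q = E q1" using periodic_mod[of E n q1] periodic by (simp add: q_def)
  moreover have "E (Suc q) = E (Suc q1)"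
  proof -
    have "Suc q mod n = Suc q1 mod n" by (simp add: q_def mod_Suc_eq)
    then show ?thesis using periodic_mod[of E n "Suc q"] periodic_mod[of E n "Suc q1"] periodic
      by metis
  qed
  ultimately have q: "q < n" "\<forall>i. E i \<le> E q" "E (Suc q) = E q"
    using q1 n_ge_4 by (simp_all add: q_def)
  have "E 0 \<noteq> E 2" using even_gap_distinct[of 0 2] n_ge_4 by simp
  moreover have "E 0 \<le> E 2" "E 2 \<le> E q" using min q(2) by blast+
  ultimately have less: "E 0 < E q" by linarith
  have "E n = E 0" using periodic[of 0] by simp
  have "q \<noteq> 0" "q \<noteq> 1" "Suc q \<noteq> n"
    using less flat q(3) \<open>E n = E 0\<close> by (metis less_irrefl One_nat_def)+
  then have q_bounds: "2 \<le> q" "q + 2 \<le> n" using q(1) by auto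
  have "bij_betw E {0 + 2..<q} {E 0<..<E q}"
    using min flat q q_bounds by (intro bij_betw_between_flat_extrema) auto
  then have up: "q - 2 = nat (E q - E 0 - 1)" by (auto dest!: bij_betw_same_card)
  have "bij_betw (\<lambda>i. - E i) {q + 2..<n} {- E q<..<- E n}"
    using min flat q q_bounds \<open>E n = E 0\<close> periodic[of 1]
    by (intro neg.bij_betw_between_flat_extrema) auto
  then have down: "n - (q + 2) = nat (E q - E 0 - 1)"
    using \<open>E n = E 0\<close> by (auto dest!: bij_betw_same_card)
  have "q = n div 2" using up down q_bounds by linarith
  moreover have "E q = E 0 + int q - 1" using up q_bounds less by linarith
  ultimately show ?thesis using q(3) by simp
qed

lemma zigzag_steps_from_flat_min:
  assumes min: "\<forall>i. E 0 \<le> E i" and flat: "E 1 = E 0" and i: "i < n"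
  shows "E (Suc (Suc i)) - E (Suc i) = zigzag_pattern n ! i"
proof -
  define H where "H = n div 2"
  have n: "n = 2 * H" "2 \<le> H" using even_n n_ge_4 by (auto simp: H_def)
  have half: "E (Suc H) = E H" "E H = E 0 + int H - 1"
    using flat_max_at_half_period[OF min flat] by (simp_all add: H_def)
  have rise: "E (Suc k) - E k = 1" if "1 \<le> k" "k < H" for k
    using unit_steps half flat that
    by (intro full_rise_imp_unit_steps[of E 1 H]) (auto simp: abs_le_iff)
  have "E n = E 0" using periodic[of 0] by simp
  have fall: "E (Suc k) - E k = -1" if "Suc H \<le> k" "k < n" for k
    using full_rise_imp_unit_steps[of "\<lambda>i. - E i" "Suc H" n k] unit_steps half n \<open>E n = E 0\<close> that
    by (auto simp: abs_le_iff)
  have "E (Suc n) = E 1" using periodic[of 1] by simp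
  then have wrap: "E (Suc (Suc i)) - E (Suc i) = 0" if "Suc i = n"
    using that flat \<open>E n = E 0\<close> by simp
  have z: "zigzag_pattern n ! i =
      (if i < H - 1 then 1 else if i = H - 1 then 0 else if i < n - 1 then -1 else 0)"
    using nth_zigzag_pattern[OF even_n i] by (simp add: H_def)
  consider "i < H - 1" | "i = H - 1" | "H \<le> i" "Suc i < n" | "Suc i = n"
    using i n by linarith
  then show ?thesis
  proof cases
    case 1
    then show ?thesis using rise[of "Suc i"] z by simp
  next
    case 2
    then have "Suc i = H" using n by simp
    then show ?thesis using half(1) z 2 by simp
  next
    case 3
    then have "\<not> i < H - 1" "i \<noteq> H - 1" "i < n - 1" using n by auto
    then show ?thesis using fall[of "Suc i"] z 3 by simp
  next
    case 4
    then have "\<not> i < H - 1" "i \<noteq> H - 1" "\<not> i < n - 1" using n by auto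
    then show ?thesis using wrap z 4 by simp
  qed
qed

lemma zigzag_steps: "\<exists>p. \<forall>i<n. E (Suc (p + i)) - E (p + i) = zigzag_pattern n ! i"
proof -
  obtain p0 where "\<forall>i. E p0 \<le> E i" using ex_min by blast
  then obtain p where p: "\<forall>i. E p \<le> E i" "E (Suc p) = E p"
    using flat_step_at_min by metis
  interpret shifted: parity_walk n "\<lambda>i. E (i + p)" by (rule parity_walk_shift)
  have "E (Suc (Suc i) + p) - E (Suc i + p) = zigzag_pattern n ! i" if "i < n" for i
    using shifted.zigzag_steps_from_flat_min[OF _ _ that] p by simp
  then show ?thesis by (intro exI[of _ "Suc p"]) (simp add: add.commute)
qed

end

section \<open>Admissible step sequences\<close>

(* If e is the periodic extension of the extended difference row of (s_1, ..., s_n), then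
   row_offset n e j is congruent to s_(j+1) - s_1 modulo n. So admissible_steps n e says that
   the row is Latin and satisfies the distance condition. *)
definition row_offset :: "nat \<Rightarrow> (nat \<Rightarrow> int) \<Rightarrow> nat \<Rightarrow> int" where
  "row_offset n e j = int j * int (n div 2) + (\<Sum>i<j. e i)"

definition admissible_steps :: "nat \<Rightarrow> (nat \<Rightarrow> int) \<Rightarrow> bool" where
  "admissible_steps n e \<longleftrightarrow> (\<forall>i. e (i + n) = e i) \<and> (\<forall>i. \<bar>e i\<bar> \<le> 1)
     \<and> int n dvd (\<Sum>i<n. e i) \<and> inj_on (\<lambda>j. row_offset n e j mod int n) {..<n}"

lemma row_offset_0 [simp]: "row_offset n e 0 = 0"
  by (simp add: row_offset_def)

lemma row_offset_Suc [simp]: "row_offset n e (Suc j) = row_offset n e j + int (n div 2) + e j"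
  by (simp add: row_offset_def algebra_simps)

lemma row_offset_mod:
  assumes "\<And>i. e (i + n) = e i" "int n dvd (\<Sum>i<n. e i)"
  shows "row_offset n e (j mod n) mod int n = row_offset n e j mod int n"
proof (rule periodic_mod)
  fix j
  have "(\<Sum>i<j + n. e i) = (\<Sum>i<j. e i) + (\<Sum>i = j..<j + n. e i)"
    using sum.atLeastLessThan_concat[of 0 j "j + n" e] by (simp add: atLeast0LessThan)
  then have "row_offset n e (j + n) = row_offset n e j + (int n * int (n div 2) + (\<Sum>i<n. e i))"
    using sum_period[of e n j] assms(1) by (simp add: row_offset_def algebra_simps)
  then show "row_offset n e (j + n) mod int n = row_offset n e j mod int n"
    using assms(2) by (simp add: mod_add_right_eq[symmetric] dvd_add_right_iff)
qed

lemma admissible_steps_window: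
  assumes "admissible_steps n e" "j < l" "l < j + n"
  shows "row_offset n e j mod int n \<noteq> row_offset n e l mod int n"
proof
  assume eq: "row_offset n e j mod int n = row_offset n e l mod int n"
  have "j mod n \<noteq> l mod n"
  proof
    assume "j mod n = l mod n"
    then have "n dvd l - j" using assms(2) by (simp add: mod_eq_dvd_iff_nat[symmetric])
    then show False using assms(2,3) by (auto dest: dvd_imp_le)
  qed
  moreover have "row_offset n e (j mod n) mod int n = row_offset n e (l mod n) mod int n"
    using eq assms(1) by (simp add: admissible_steps_def row_offset_mod)
  moreover have "j mod n < n" "l mod n < n" using assms(2,3) by simp_all
  ultimately show False
    using assms(1) unfolding admissible_steps_def inj_on_def by blast
qed

lemma row_offset_shift:
  "row_offset n (\<lambda>i. e (i + r)) j = row_offset n e (j + r) - row_offset n e r"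
  by (induction j) (simp_all add: algebra_simps)

lemma admissible_steps_shift:
  assumes "admissible_steps n e"
  shows "admissible_steps n (\<lambda>i. e (i + r))"
  unfolding admissible_steps_def
proof (intro conjI allI inj_onI)
  have "(\<Sum>i<n. e (i + r)) = (\<Sum>i<n. e i)"
    using sum.shift_bounds_nat_ivl[of e 0 r n] sum_period[of e n r] assms
    by (simp add: admissible_steps_def atLeast0LessThan add.commute)
  then show "int n dvd (\<Sum>i<n. e (i + r))" using assms by (simp add: admissible_steps_def)
next
  fix j l assume jl: "j \<in> {..<n}" "l \<in> {..<n}"
    and eq: "row_offset n (\<lambda>i. e (i + r)) j mod int n = row_offset n (\<lambda>i. e (i + r)) l mod int n"
  then have "row_offset n e (j + r) mod int n = row_offset n e (l + r) mod int n"
    using eq by (simp add: row_offset_shift mod_eq_dvd_iff)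
  then show "j = l"
    using admissible_steps_window[OF assms, of "j + r" "l + r"]
      admissible_steps_window[OF assms, of "l + r" "j + r"] jl
    by (cases "j < l") (auto simp: not_less_iff_gr_or_eq)
next
  fix i
  show "e (i + n + r) = e (i + r)"
    using assms unfolding admissible_steps_def by (metis add.commute add.left_commute)
qed (use assms in \<open>simp add: admissible_steps_def\<close>)

lemma zigzag_offsets_distinct:
  fixes H j l :: nat
  assumes "2 \<le> H" "j < l" "l < 2 * H"
  defines "f \<equiv> \<lambda>k. if k < H then int k else 2 * int H - 1 - int k"
  shows "\<not> int (2 * H) dvd int (l - j) * int H + (f l - f j)"
proof
  assume dvd: "int (2 * H) dvd int (l - j) * int H + (f l - f j)"
  have f_range: "0 \<le> f k" "f k < int H" if "k < 2 * H" for k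
    using that by (auto simp: f_def)
  show False
  proof (cases "even (l - j)")
    case True
    then obtain t where "l - j = 2 * t" by (rule evenE)
    then have "int (l - j) * int H + (f l - f j) = int (2 * H) * int t + (f l - f j)" by simp
    then have "int (2 * H) dvd f l - f j" using dvd by (metis dvd_add_right_iff dvd_triv_left)
    moreover have "\<bar>f l - f j\<bar> < int (2 * H)" using f_range[of j] f_range[of l] assms by auto
    ultimately have "f l = f j" using dvd_imp_le_int[of "f l - f j" "int (2 * H)"] by fastforce
    then have "j < H" "H \<le> l" "int j = 2 * int H - 1 - int l"
      using assms(2) unfolding f_def by (auto split: if_splits)
    then show False using True by presburger
  next
    case False
    then obtain t where "l - j = 2 * t + 1" by (rule oddE)
    then have "int (l - j) * int H + (f l - f j) = int (2 * H) * int t + (int H + (f l - f j))"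
      by (simp add: algebra_simps)
    then have "int (2 * H) dvd int H + (f l - f j)"
      using dvd by (metis dvd_add_right_iff dvd_triv_left)
    moreover have "0 < int H + (f l - f j)" "int H + (f l - f j) < int (2 * H)"
      using f_range[of j] f_range[of l] assms by auto
    ultimately show False by (auto dest: zdvd_imp_le)
  qed
qed

lemma admissible_zigzag:
  assumes "even n" "4 \<le> n"
  shows "admissible_steps n (\<lambda>i. zigzag_pattern n ! (i mod n))"
    (is "admissible_steps n ?z")
proof -
  obtain H where n: "n = 2 * H" using assms(1) by blast
  then have "2 \<le> H" using assms(2) by simp
  define f where "f k = (if k < H then int k else 2 * int H - 1 - int k)" for k
  have walk: "(\<Sum>i<j. ?z i) = f j" if "j < n" for j
    using zigzag_pattern_walk[of j H] that n by (simp add: f_def)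
  have "(\<Sum>i<n. ?z i) = 0"
  proof -
    obtain m where m: "n = Suc m" using assms by (cases n) auto
    then have "(\<Sum>i<n. ?z i) = f m + zigzag_pattern n ! m" using walk[of m] by simp
    moreover have "\<not> m < n div 2 - 1" "m \<noteq> n div 2 - 1" "\<not> m < n - 1" "\<not> m < H"
      "int m = 2 * int H - 1"
      using m n \<open>2 \<le> H\<close> by auto
    ultimately show ?thesis using nth_zigzag_pattern[OF assms(1), of m] m by (simp add: f_def)
  qed
  moreover have "row_offset n ?z j mod int n \<noteq> row_offset n ?z l mod int n"
    if "j < l" "l < n" for j l
  proof
    assume "row_offset n ?z j mod int n = row_offset n ?z l mod int n"
    then have "int n dvd int (l - j) * int H + (f l - f j)"
      using walk[of j] walk[of l] that n
      by (auto simp: row_offset_def mod_eq_dvd_iff of_nat_diff algebra_simps)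
    then show False
      using zigzag_offsets_distinct[OF \<open>2 \<le> H\<close>, of j l] that n by (simp add: f_def)
  qed
  then have "inj_on (\<lambda>j. row_offset n ?z j mod int n) {..<n}"
    by (intro inj_onI) (metis lessThan_iff linorder_neqE_nat)
  moreover have "\<bar>?z i\<bar> \<le> 1" for i
    using nth_zigzag_pattern[OF assms(1), of "i mod n"] assms by simp
  ultimately show ?thesis by (simp add: admissible_steps_def)
qed

(* The offsets are j * (H + c), with H = n div 2; they are distinct mod 2 * H iff H + c is odd
   (it is then coprime to 2 * H), i.e. iff H is even. *)
lemma admissible_const_iff:
  assumes "even n" "c = 1 \<or> c = -1"
  shows "admissible_steps n (\<lambda>_. c) \<longleftrightarrow> 4 dvd n"
proof -
  define H where "H = n div 2"
  have n: "n = 2 * H" using assms by (simp add: H_def)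
  have offset: "row_offset n (\<lambda>_. c) j = int j * (int H + c)" for j
    by (simp add: row_offset_def H_def algebra_simps)
  have "inj_on (\<lambda>j. row_offset n (\<lambda>_. c) j mod int n) {..<n} \<longleftrightarrow> 4 dvd n"
  proof
    assume inj: "inj_on (\<lambda>j. row_offset n (\<lambda>_. c) j mod int n) {..<n}"
    show "4 dvd n"
    proof (rule ccontr)
      assume "\<not> 4 dvd n"
      then have "odd H" using n by presburger
      then have "even (int H + c)" using assms(2) by auto
      then obtain u where "int H + c = 2 * u" by (rule evenE)
      then have "row_offset n (\<lambda>_. c) H = int n * u" using offset[of H] n by simp
      then have "row_offset n (\<lambda>_. c) H mod int n = row_offset n (\<lambda>_. c) 0 mod int n" by simp
      moreover have "0 < H" using \<open>odd H\<close> by (rule odd_pos)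
      ultimately show False using inj n unfolding inj_on_def by fastforce
    qed
  next
    assume "4 dvd n"
    then have "odd (int H + c)" using n assms(2) by auto
    moreover have "coprime (int H + c) (int H)"
    proof (rule coprimeI)
      fix d assume "d dvd int H + c" "d dvd int H"
      then have "d dvd c" by (metis add_diff_cancel_left' dvd_diff)
      then show "is_unit d" using assms(2) by auto
    qed
    ultimately have cop: "coprime (int n) (int H + c)"
      using n by (simp add: coprime_commute coprime_right_2_iff_odd)
    show "inj_on (\<lambda>j. row_offset n (\<lambda>_. c) j mod int n) {..<n}"
    proof (rule inj_onI)
      fix j l assume jl: "j \<in> {..<n}" "l \<in> {..<n}"
        "row_offset n (\<lambda>_. c) j mod int n = row_offset n (\<lambda>_. c) l mod int n"
      then have "int n dvd (int j - int l) * (int H + c)"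
        by (simp add: offset mod_eq_dvd_iff algebra_simps)
      then have "int j mod int n = int l mod int n"
        using cop by (simp add: coprime_dvd_mult_left_iff mod_eq_dvd_iff)
      then show "j = l" using jl(1,2) by simp
    qed
  qed
  then show ?thesis using assms(2) by (auto simp: admissible_steps_def)
qed

lemma periodic_window_shift:
  fixes e :: "nat \<Rightarrow> 'a"
  assumes per: "\<And>i. e (i + n) = e i" and "0 < n" "\<forall>i<n. e (p + i) = f i"
  shows "e i = f ((n - p mod n + i) mod n)"
proof -
  define k where "k = (n - p mod n + i) mod n"
  have "(p + k) mod n = (p + (n - p mod n + i)) mod n"
    unfolding k_def by (rule mod_add_right_eq)
  also have "\<dots> = (p mod n + (n - p mod n + i)) mod n" by (rule mod_add_left_eq[symmetric])
  also have "p mod n + (n - p mod n + i) = n + i" using mod_less_divisor[OF assms(2), of p] by linarith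
  finally have "(p + k) mod n = i mod n" by simp
  then have "e i = e (p + k)" using periodic_mod[of e, OF per] by metis
  also have "\<dots> = f k" using assms(2,3) by (simp add: k_def)
  finally show ?thesis by (simp add: k_def)
qed

lemma admissible_steps_total:
  assumes "admissible_steps n e"
  shows "(\<Sum>i<n. e i) \<in> {- int n, 0, int n}"
proof -
  have "int n dvd (\<Sum>i<n. e i)" using assms by (simp add: admissible_steps_def)
  then obtain k where k: "(\<Sum>i<n. e i) = int n * k" by (rule dvdE)
  have "\<bar>\<Sum>i<n. e i\<bar> \<le> (\<Sum>i<n. \<bar>e i\<bar>)" by (rule sum_abs)
  also have "\<dots> \<le> int n" using assms sum_bounded_above[of "{..<n}" "\<lambda>i. \<bar>e i\<bar>" 1]
    by (simp add: admissible_steps_def)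
  finally have "int n * \<bar>k\<bar> \<le> int n * 1" by (simp add: k abs_mult)
  show ?thesis
  proof (cases "n = 0")
    case False
    then have "\<bar>k\<bar> \<le> 1" using \<open>int n * \<bar>k\<bar> \<le> int n * 1\<close> by fastforce
    then have "k = -1 \<or> k = 0 \<or> k = 1" by auto
    then show ?thesis using k by auto
  qed simp
qed

lemma admissible_steps_parity_walk:
  assumes adm: "admissible_steps n e" and total: "(\<Sum>i<n. e i) = 0" and "even n" "4 \<le> n"
  shows "parity_walk n (\<lambda>j. \<Sum>i<j. e i)"
proof unfold_locales
  have per: "\<And>i. e (i + n) = e i" and bounded: "\<And>i. \<bar>e i\<bar> \<le> 1"
    using adm by (auto simp: admissible_steps_def)
  fix i j l :: nat
  have "(\<Sum>k<i + n. e k) = (\<Sum>k<i. e k) + (\<Sum>k = i..<i + n. e k)"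
    using sum.atLeastLessThan_concat[of 0 i "i + n" e] by (simp add: atLeast0LessThan)
  then show "(\<Sum>k<i + n. e k) = (\<Sum>k<i. e k)" using sum_period[of e n i] per total by simp
  show "\<bar>(\<Sum>k<Suc i. e k) - (\<Sum>k<i. e k)\<bar> \<le> 1" using bounded[of i] by simp
  assume jl: "j < l" "l < j + n" "even (l - j)"
  from jl(3) obtain t where "l - j = 2 * t" by (rule evenE)
  then have "l = j + 2 * t" using jl(1) by simp
  moreover obtain H where "n = 2 * H" using \<open>even n\<close> by (rule evenE)
  ultimately have diff: "row_offset n e l
      = row_offset n e j + int n * int t + ((\<Sum>k<l. e k) - (\<Sum>k<j. e k))"
    by (simp add: row_offset_def algebra_simps)
  show "(\<Sum>k<j. e k) \<noteq> (\<Sum>k<l. e k)"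
  proof
    assume "(\<Sum>k<j. e k) = (\<Sum>k<l. e k)"
    then have "row_offset n e l mod int n = row_offset n e j mod int n" using diff by simp
    then show False using admissible_steps_window[OF adm jl(1,2)] by simp
  qed
qed (use assms in auto)

lemma admissible_steps_cases:
  assumes adm: "admissible_steps n e" and "even n" "4 \<le> n"
  shows "(\<exists>r. \<forall>i. e i = zigzag_pattern n ! ((r + i) mod n)) \<or> e = (\<lambda>_. 1) \<or> e = (\<lambda>_. -1)"
proof -
  have per: "\<And>i. e (i + n) = e i" and bounded: "\<And>i. \<bar>e i\<bar> \<le> 1"
    using adm by (auto simp: admissible_steps_def)
  have const: "e = (\<lambda>_. c)" if "\<forall>i<n. e i = c" for c
  proof
    fix i
    have "e (i mod n) = c" using that \<open>4 \<le> n\<close> by simp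
    then show "e i = c" using periodic_mod[of e n i] per by simp
  qed
  consider "(\<Sum>i<n. e i) = 0" | "(\<Sum>i<n. e i) = int n" | "(\<Sum>i<n. - e i) = int n"
    using admissible_steps_total[OF adm] by (auto simp: sum_negf)
  then show ?thesis
  proof cases
    case 1
    interpret parity_walk n "\<lambda>j. \<Sum>i<j. e i"
      using admissible_steps_parity_walk[OF adm 1 assms(2,3)] .
    obtain p where "\<forall>i<n. e (p + i) = zigzag_pattern n ! i"
      using zigzag_steps by auto
    then have "e i = zigzag_pattern n ! ((n - p mod n + i) mod n)" for i
      using \<open>4 \<le> n\<close> by (intro periodic_window_shift[of e n, OF per]) simp_all
    then show ?thesis by blast
  next
    case 2
    then have "\<forall>i<n. e i = 1"
      using bounded
      by (intro allI impI sum_eq_card_imp_eq_one[of "{..<n}" e]) (auto simp: abs_le_iff)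
    then show ?thesis using const by blast
  next
    case 3
    then have "\<forall>i<n. - e i = 1"
      using bounded
      by (intro allI impI sum_eq_card_imp_eq_one[of "{..<n}" "\<lambda>i. - e i"]) (auto simp: abs_le_iff)
    then show ?thesis using const[of "-1"] by force
  qed
qed

section \<open>Latin rows and their extended difference rows\<close>

lemma length_ext_diff_row [simp]: "length (ext_diff_row n xs) = n"
  by (simp add: ext_diff_row_def)

lemma nth_ext_diff_row:
  "i < n \<Longrightarrow> ext_diff_row n xs ! i = (xs ! ((i + 1) mod n) - xs ! i) mod int n - int (n div 2)"
  by (simp add: ext_diff_row_def zdiv_int)

lemma cdist_bound_iff:
  assumes "even n" "4 \<le> n"
  shows "int n div 2 - 1 \<le> cdist n a b \<longleftrightarrow> \<bar>(b - a) mod int n - int (n div 2)\<bar> \<le> 1"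
proof -
  obtain H where n: "n = 2 * H" using assms(1) by blast
  then have H: "int n div 2 = int H" "n div 2 = H" "2 \<le> H" using assms(2) by auto
  define h where "h = (b - a) mod int n"
  have h: "0 \<le> h" "h < int n" using assms by (simp_all add: h_def)
  have "(a - b) mod int n = (if h = 0 then 0 else int n - h)"
    using zmod_zminus1_eq_if[of "b - a" "int n"] by (simp add: h_def)
  then have "cdist n a b = (if h = 0 then 0 else min (int n - h) h)"
    by (simp add: cdist_def h_def[symmetric])
  then show ?thesis unfolding H h_def[symmetric] using h n H(3) by (auto simp: min_def)
qed

lemma dist_ok_iff_ext_diff_row:
  assumes "even n" "4 \<le> n"
  shows "dist_ok n xs \<longleftrightarrow> (\<forall>i<n. \<bar>ext_diff_row n xs ! i\<bar> \<le> 1)"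
  by (simp add: dist_ok_def nth_ext_diff_row cdist_bound_iff[OF assms])

lemma row_offset_ext_diff_row:
  assumes "0 < n"
  shows "row_offset n (\<lambda>i. ext_diff_row n xs ! (i mod n)) j mod int n
       = (xs ! (j mod n) - xs ! 0) mod int n"
proof (induction j)
  case (Suc j)
  let ?e = "\<lambda>i. ext_diff_row n xs ! (i mod n)"
  have "(j mod n + 1) mod n = Suc j mod n" by (simp add: mod_Suc_eq)
  then have step: "?e j + int (n div 2) = (xs ! (Suc j mod n) - xs ! (j mod n)) mod int n"
    using assms by (simp add: nth_ext_diff_row)
  have "row_offset n ?e (Suc j) mod int n = (row_offset n ?e j + (?e j + int (n div 2))) mod int n"
    by (simp add: algebra_simps)
  also have "\<dots> = ((xs ! (j mod n) - xs ! 0) mod int n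
      + (xs ! (Suc j mod n) - xs ! (j mod n)) mod int n) mod int n"
    by (simp only: step Suc.IH[symmetric] mod_add_left_eq)
  also have "\<dots> = (xs ! (Suc j mod n) - xs ! 0) mod int n"
    by (simp add: mod_add_eq)
  finally show ?case .
qed simp

lemma latin_row_nth_bounds:
  assumes "latin_row n xs" "j < n"
  shows "1 \<le> xs ! j" "xs ! j \<le> int n"
  using assms nth_mem[of j xs] by (auto simp: latin_row_def)

lemma admissible_ext_diff_row:
  assumes latin: "latin_row n xs" and "dist_ok n xs" "even n" "4 \<le> n"
  shows "admissible_steps n (\<lambda>i. ext_diff_row n xs ! (i mod n))"
  unfolding admissible_steps_def
proof (intro conjI allI inj_onI)
  let ?e = "\<lambda>i. ext_diff_row n xs ! (i mod n)"
  have n: "0 < n" using assms by simp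
  fix i
  show "\<bar>?e i\<bar> \<le> 1"
    using assms dist_ok_iff_ext_diff_row[of n xs] by simp
  have "row_offset n ?e n mod int n = 0" using row_offset_ext_diff_row[OF n, of xs n] by simp
  then show "int n dvd (\<Sum>i<n. ?e i)"
    by (simp add: row_offset_def mod_eq_0_iff_dvd dvd_add_right_iff)
next
  let ?e = "\<lambda>i. ext_diff_row n xs ! (i mod n)"
  fix j l assume jl: "j \<in> {..<n}" "l \<in> {..<n}" "row_offset n ?e j mod int n = row_offset n ?e l mod int n"
  then have "(xs ! j - xs ! 0) mod int n = (xs ! l - xs ! 0) mod int n"
    using row_offset_ext_diff_row[of n xs] by simp
  then have "int n dvd xs ! j - xs ! l" by (simp add: mod_eq_dvd_iff)
  then have congr: "(xs ! j - 1) mod int n = (xs ! l - 1) mod int n"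
    by (simp add: mod_eq_dvd_iff)
  have "xs ! j = (xs ! j - 1) mod int n + 1"
    using latin_row_nth_bounds[OF latin, of j] jl(1) by simp
  also have "\<dots> = xs ! l"
    unfolding congr using latin_row_nth_bounds[OF latin, of l] jl(2) by simp
  finally have "xs ! j = xs ! l" .
  then show "j = l" using latin jl(1,2) by (simp add: latin_row_def nth_eq_iff_index_eq)
qed simp

definition row_of_steps :: "nat \<Rightarrow> (nat \<Rightarrow> int) \<Rightarrow> int list" where
  "row_of_steps n e = map (\<lambda>j. row_offset n e j mod int n + 1) [0..<n]"

lemma row_of_steps_ext_diff_row:
  assumes "latin_row n xs" "xs ! 0 = 1"
  shows "row_of_steps n (\<lambda>i. ext_diff_row n xs ! (i mod n)) = xs"
proof (rule nth_equalityI)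
  show "length (row_of_steps n (\<lambda>i. ext_diff_row n xs ! (i mod n))) = length xs"
    using assms by (simp add: row_of_steps_def latin_row_def)
  fix j assume "j < length (row_of_steps n (\<lambda>i. ext_diff_row n xs ! (i mod n)))"
  then have j: "j < n" by (simp add: row_of_steps_def)
  then show "row_of_steps n (\<lambda>i. ext_diff_row n xs ! (i mod n)) ! j = xs ! j"
    using row_offset_ext_diff_row[of n xs j] latin_row_nth_bounds[OF assms(1) j] assms(2)
    by (simp add: row_of_steps_def)
qed

lemma nth_row_of_steps: "j < n \<Longrightarrow> row_of_steps n e ! j = row_offset n e j mod int n + 1"
  by (simp add: row_of_steps_def)

lemma ext_diff_row_row_of_steps:
  assumes adm: "admissible_steps n e" and "4 \<le> n"
  shows "ext_diff_row n (row_of_steps n e) = map e [0..<n]"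
proof (rule nth_equalityI)
  fix i assume "i < length (ext_diff_row n (row_of_steps n e))"
  then have i: "i < n" by simp
  have per: "\<And>i. e (i + n) = e i" "int n dvd (\<Sum>i<n. e i)" and bound: "\<bar>e i\<bar> \<le> 1"
    using adm by (auto simp: admissible_steps_def)
  have "(row_of_steps n e ! ((i + 1) mod n) - row_of_steps n e ! i) mod int n
      = (row_offset n e ((i + 1) mod n) mod int n - row_offset n e i mod int n) mod int n"
    using i \<open>4 \<le> n\<close> by (simp add: nth_row_of_steps)
  also have "\<dots> = (row_offset n e (Suc i) - row_offset n e i) mod int n"
    using row_offset_mod[OF per, of "Suc i"] by (simp add: mod_diff_eq)
  also have "\<dots> = (int (n div 2) + e i) mod int n" by simp
  also have "\<dots> = int (n div 2) + e i"
    using bound \<open>4 \<le> n\<close> by (intro mod_pos_pos_trivial) (auto simp: abs_le_iff)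
  finally show "ext_diff_row n (row_of_steps n e) ! i = map e [0..<n] ! i"
    using i by (simp add: nth_ext_diff_row)
qed simp

lemma latin_row_of_steps:
  assumes "admissible_steps n e"
  shows "latin_row n (row_of_steps n e)"
proof -
  have "inj_on (\<lambda>j. row_offset n e j mod int n + 1) {0..<n}"
    using assms by (auto simp: admissible_steps_def inj_on_def atLeast0LessThan)
  then have dist: "distinct (row_of_steps n e)" by (simp add: row_of_steps_def distinct_map)
  have "row_offset n e j mod int n + 1 \<in> {1..int n}" if "j < n" for j
  proof -
    have "0 < int n" using that by simp
    then show ?thesis using pos_mod_bound pos_mod_sign by (simp add: add1_zle_eq)
  qed
  then have sub: "set (row_of_steps n e) \<subseteq> {1..int n}"
    by (auto simp: row_of_steps_def)
  have "card (set (row_of_steps n e)) = card {1..int n}"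
    using distinct_card[OF dist] by (simp add: row_of_steps_def)
  then have "set (row_of_steps n e) = {1..int n}"
    using sub by (intro card_subset_eq) auto
  then show ?thesis using dist by (simp add: latin_row_def row_of_steps_def)
qed

definition admissible_rows :: "nat \<Rightarrow> int list set" where
  "admissible_rows n = {d. length d = n \<and> admissible_steps n (\<lambda>i. d ! (i mod n))}"

lemma map_nth_mod_length: "length xs = n \<Longrightarrow> map (\<lambda>i. xs ! (i mod n)) [0..<n] = xs"
  by (intro nth_equalityI) auto

lemma ext_diff_row_bij:
  assumes "even n" "4 \<le> n"
  shows "bij_betw (ext_diff_row n) {xs. latin_row n xs \<and> dist_ok n xs \<and> xs ! 0 = 1}
           (admissible_rows n)"
proof (rule bij_betw_byWitness[where f' = "\<lambda>d. row_of_steps n (\<lambda>i. d ! (i mod n))"];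
    intro ballI subsetI)
  fix xs assume "xs \<in> {xs. latin_row n xs \<and> dist_ok n xs \<and> xs ! 0 = 1}"
  then show "row_of_steps n (\<lambda>i. ext_diff_row n xs ! (i mod n)) = xs"
    by (simp add: row_of_steps_ext_diff_row)
next
  fix d assume "d \<in> admissible_rows n"
  then have d: "length d = n" "admissible_steps n (\<lambda>i. d ! (i mod n))"
    by (auto simp: admissible_rows_def)
  show "ext_diff_row n (row_of_steps n (\<lambda>i. d ! (i mod n))) = d"
    using ext_diff_row_row_of_steps[OF d(2) assms(2)] map_nth_mod_length[OF d(1)] by simp
next
  fix d assume "d \<in> ext_diff_row n ` {xs. latin_row n xs \<and> dist_ok n xs \<and> xs ! 0 = 1}"
  then obtain xs where "latin_row n xs" "dist_ok n xs" "d = ext_diff_row n xs" by blast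
  then show "d \<in> admissible_rows n"
    using admissible_ext_diff_row[OF _ _ assms, of xs] by (simp add: admissible_rows_def)
next
  fix xs assume "xs \<in> (\<lambda>d. row_of_steps n (\<lambda>i. d ! (i mod n))) ` admissible_rows n"
  then obtain d where d: "length d = n" "admissible_steps n (\<lambda>i. d ! (i mod n))"
    and xs: "xs = row_of_steps n (\<lambda>i. d ! (i mod n))" by (auto simp: admissible_rows_def)
  have "ext_diff_row n xs = d"
    using ext_diff_row_row_of_steps[OF d(2) assms(2)] map_nth_mod_length[OF d(1)] xs by simp
  moreover have "\<bar>d ! i\<bar> \<le> 1" if "i < n" for i
    using d(2) that unfolding admissible_steps_def by (metis mod_less)
  ultimately have "dist_ok n xs" using dist_ok_iff_ext_diff_row[OF assms] by simp
  moreover have "xs ! 0 = 1" using assms(2) xs by (simp add: nth_row_of_steps)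
  moreover have "latin_row n xs" using latin_row_of_steps[OF d(2)] xs by simp
  ultimately show "xs \<in> {xs. latin_row n xs \<and> dist_ok n xs \<and> xs ! 0 = 1}" by blast
qed

section \<open>Rotations of the zigzag pattern and the count\<close>

lemma rot1_eq_rotate: "rot1 xs = rotate (length xs - 1) xs"
proof (cases "xs = []")
  case False
  have "rotate (length (butlast xs)) (butlast xs @ [last xs]) = [last xs] @ butlast xs"
    by (rule rotate_append)
  then show ?thesis using False by (simp add: rot1_def)
qed (simp add: rot1_def)

lemma funpow_rot1: "(rot1 ^^ k) xs = rotate (k * (length xs - 1)) xs"
  by (induction k) (simp_all add: rot1_eq_rotate rotate_rotate)

lemma is_rotation_of_rotate:
  assumes "xs \<noteq> []"
  shows "is_rotation_of (rotate r xs) xs"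
proof -
  define n where "n = length xs"
  define m where "m = r mod n"
  have "0 < n" "m < n" using assms by (simp_all add: n_def m_def)
  then have "int ((n - m) * (n - 1)) = (int n - int m) * (int n - 1)" by (simp add: of_nat_diff)
  also have "\<dots> = (int n - int m - 1) * int n + int m" by (simp add: algebra_simps)
  also have "\<dots> = int ((n - m - 1) * n + m)" using \<open>m < n\<close> by (simp add: of_nat_diff)
  finally have "(n - m) * (n - 1) = (n - m - 1) * n + m" by (simp only: of_nat_eq_iff)
  then have "(n - m) * (n - 1) mod n = m" using \<open>m < n\<close> by simp
  then have "(rot1 ^^ (n - m)) xs = rotate r xs"
    by (metis funpow_rot1 n_def m_def rotate_conv_mod)
  moreover have "n - m \<in> {1..length xs}" using \<open>m < n\<close> by (simp add: n_def)
  ultimately show ?thesis unfolding is_rotation_of_def by metis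
qed

lemma rotate_zigzag_pattern_neq:
  assumes "even n" "4 \<le> n" "0 < k" "k < n"
  shows "rotate k (zigzag_pattern n) \<noteq> zigzag_pattern n"
proof
  let ?z = "zigzag_pattern n"
  assume rot: "rotate k ?z = ?z"
  have len: "length ?z = n" using assms by (simp add: length_zigzag_pattern)
  have nth: "rotate k ?z ! i = ?z ! ((k + i) mod n)" if "i < n" for i
    using that len by (simp add: nth_rotate)
  have "?z ! (n - 1 - k) = ?z ! (n - 1)"
    using nth[of "n - 1 - k"] rot assms(3,4) by simp
  then have "n - 1 - k = n div 2 - 1"
    using nth_zigzag_pattern[OF assms(1)] assms by (auto split: if_splits)
  then have "k = n div 2" using assms by auto
  then have "?z ! 0 = ?z ! (n div 2)" using nth[of 0] rot assms by simp
  then show False using nth_zigzag_pattern[OF assms(1)] assms by (auto split: if_splits)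
qed

lemma inj_on_rotate_zigzag_pattern:
  assumes "even n" "4 \<le> n"
  shows "inj_on (\<lambda>r. rotate r (zigzag_pattern n)) {..<n}"
proof -
  have "rotate r (zigzag_pattern n) \<noteq> rotate s (zigzag_pattern n)" if "r < s" "s < n" for r s
  proof
    assume "rotate r (zigzag_pattern n) = rotate s (zigzag_pattern n)"
    then have "rotate (n - s + r) (zigzag_pattern n) = rotate (n - s + s) (zigzag_pattern n)"
      by (metis rotate_rotate)
    also have "\<dots> = zigzag_pattern n" using that assms by (simp add: length_zigzag_pattern)
    finally have "rotate (n - s + r) (zigzag_pattern n) = zigzag_pattern n" .
    moreover have "0 < n - s + r" "n - s + r < n" using that by auto
    ultimately show False using rotate_zigzag_pattern_neq[OF assms] by simp
  qed
  then show ?thesis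
    by (intro inj_onI) (metis lessThan_iff linorder_neqE_nat)
qed

lemma admissible_rotate_zigzag:
  assumes "even n" "4 \<le> n"
  shows "admissible_steps n (\<lambda>i. rotate r (zigzag_pattern n) ! (i mod n))"
proof -
  have len: "length (zigzag_pattern n) = n" using assms by (simp add: length_zigzag_pattern)
  have "rotate r (zigzag_pattern n) ! (i mod n) = zigzag_pattern n ! ((i + r) mod n)" for i
    using assms len by (simp add: nth_rotate mod_add_right_eq add.commute)
  then show ?thesis
    using admissible_steps_shift[OF admissible_zigzag[OF assms], of r] by simp
qed

lemma admissible_rows_eq:
  assumes "even n" "4 \<le> n"
  shows "admissible_rows n = (\<lambda>r. rotate r (zigzag_pattern n)) ` {..<n}
         \<union> (if n mod 4 = 0 then {replicate n 1, replicate n (-1)} else {})"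
    (is "?D = ?R \<union> ?C")
proof
  have len: "length (zigzag_pattern n) = n" using assms by (simp add: length_zigzag_pattern)
  have const: "admissible_steps n (\<lambda>i. replicate n c ! (i mod n)) \<longleftrightarrow> n mod 4 = 0"
    if "c = 1 \<or> c = -1" for c
    using admissible_const_iff[OF assms(1) that] assms(2) by (simp add: dvd_eq_mod_eq_0)
  show "?D \<subseteq> ?R \<union> ?C"
  proof
    fix d assume "d \<in> ?D"
    then have d: "length d = n" "admissible_steps n (\<lambda>i. d ! (i mod n))"
      by (auto simp: admissible_rows_def)
    have const_case: "d \<in> ?R \<union> ?C"
      if const_d: "(\<lambda>i. d ! (i mod n)) = (\<lambda>_. c)" and c: "c = 1 \<or> c = -1" for c
    proof -
      have "d ! i = c" if "i < n" for i using fun_cong[OF const_d, of i] that by simp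
      then have "d = replicate n c" using d(1) by (intro nth_equalityI) auto
      moreover have "n mod 4 = 0" using d(2) const[OF c] \<open>d = replicate n c\<close> by simp
      ultimately show ?thesis using c by (intro UnI2) auto
    qed
    from admissible_steps_cases[OF d(2) assms] show "d \<in> ?R \<union> ?C"
    proof (elim disjE exE)
      fix r assume r: "\<forall>i. d ! (i mod n) = zigzag_pattern n ! ((r + i) mod n)"
      have "d ! i = rotate r (zigzag_pattern n) ! i" if "i < n" for i
      proof -
        have "d ! i = d ! (i mod n)" using that by simp
        also have "\<dots> = zigzag_pattern n ! ((r + i) mod n)" using r by simp
        also have "\<dots> = rotate r (zigzag_pattern n) ! i" using that len by (simp add: nth_rotate)
        finally show ?thesis .
      qed
      then have "d = rotate r (zigzag_pattern n)" using d(1) len by (intro nth_equalityI) auto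
      then have "d = rotate (r mod n) (zigzag_pattern n)" using len by (metis rotate_conv_mod)
      moreover have "r mod n \<in> {..<n}" using assms by simp
      ultimately show ?thesis by (intro UnI1) blast
    next
      assume "(\<lambda>i. d ! (i mod n)) = (\<lambda>_. 1)"
      then show ?thesis by (rule const_case) simp
    next
      assume "(\<lambda>i. d ! (i mod n)) = (\<lambda>_. -1)"
      then show ?thesis by (rule const_case) simp
    qed
  qed
  show "?R \<union> ?C \<subseteq> ?D"
    using admissible_rotate_zigzag[OF assms] const len by (auto simp: admissible_rows_def)
qed

lemma card_zigzag_rotations_and_constants:
  assumes "even n" "4 \<le> n"
  shows "card ((\<lambda>r. rotate r (zigzag_pattern n)) ` {..<n}
           \<union> (if n mod 4 = 0 then {replicate n 1, replicate n (-1 :: int)} else {}))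
         = (if n mod 4 = 0 then n + 2 else n)"
proof -
  let ?R = "(\<lambda>r. rotate r (zigzag_pattern n)) ` {..<n}"
  let ?C = "if n mod 4 = 0 then {replicate n 1, replicate n (-1 :: int)} else {}"
  have "zigzag_pattern n ! (n div 2 - 1) = 0" "n div 2 - 1 < n"
    using nth_zigzag_pattern[OF assms(1)] assms by auto
  moreover have "length (zigzag_pattern n) = n" using assms by (simp add: length_zigzag_pattern)
  ultimately have "0 \<in> set (zigzag_pattern n)" unfolding in_set_conv_nth by metis
  then have "0 \<in> set d" if "d \<in> ?R" for d using that by auto
  moreover have "0 \<notin> set d" if "d \<in> ?C" for d using that by (auto split: if_splits)
  ultimately have "?R \<inter> ?C = {}" by blast
  moreover have "card ?R = n"
    using card_image[OF inj_on_rotate_zigzag_pattern[OF assms]] by simp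
  moreover have "card ?C = (if n mod 4 = 0 then 2 else 0)"
    using assms by (cases n) auto
  ultimately show ?thesis by (simp add: card_Un_disjoint)
qed

theorem mainTheorem4:
  fixes n :: nat
  assumes "n \<ge> 6" and "even n"
  shows "(\<forall>xs. latin_row n xs \<and> dist_ok n xs \<longrightarrow>
            is_rotation_of (ext_diff_row n xs) (zigzag_pattern n)
            \<or> ext_diff_row n xs = replicate n 1
            \<or> ext_diff_row n xs = replicate n (-1))
         \<and> card {xs. latin_row n xs \<and> dist_ok n xs \<and> xs ! 0 = 1}
             = (if n mod 4 = 0 then n + 2 else n)"
proof
  have n: "even n" "4 \<le> n" using assms by auto
  note diff_rows = admissible_rows_eq[OF n]
  show "\<forall>xs. latin_row n xs \<and> dist_ok n xs \<longrightarrow>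
          is_rotation_of (ext_diff_row n xs) (zigzag_pattern n)
          \<or> ext_diff_row n xs = replicate n 1 \<or> ext_diff_row n xs = replicate n (-1)"
  proof (intro allI impI, elim conjE)
    fix xs assume "latin_row n xs" "dist_ok n xs"
    then have "ext_diff_row n xs \<in> admissible_rows n"
      using admissible_ext_diff_row n by (simp add: admissible_rows_def)
    moreover have "zigzag_pattern n \<noteq> []" using n by (auto simp: zigzag_pattern_def)
    ultimately show "is_rotation_of (ext_diff_row n xs) (zigzag_pattern n)
          \<or> ext_diff_row n xs = replicate n 1 \<or> ext_diff_row n xs = replicate n (-1)"
      unfolding diff_rows by (auto simp: is_rotation_of_rotate split: if_splits)
  qed
  show "card {xs. latin_row n xs \<and> dist_ok n xs \<and> xs ! 0 = 1} = (if n mod 4 = 0 then n + 2 else n)"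
    using bij_betw_same_card[OF ext_diff_row_bij[OF n]] card_zigzag_rotations_and_constants[OF n]
    unfolding diff_rows by simp
qed

end
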